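(* For every $n\ge1$, the map $\psi$ defined below is a well-defined bijection from $\mathcal{S}_n$ to $\mathfrak{R}_n$.
   Context: A snake of length $n$ is a word $p_1\cdots p_n$ with $p_i\in\{\pm1,\dots,\pm n\}$ such that: - $|p_1|\cdots|p_n|$ is a permutation of $[n]$; - $p_1>0$; - $p_1>p_2<p_3>p_4<\cdots$. Let $\mathcal{S}_n$ be the set of snakes of length $n$. A permutation $\pi\in\mathfrak{S}_{2n}$ is alternating if $\pi_1>\pi_2<\pi_3>\cdots$. It is rc-invariant if $\pi_{2n+1-i}=2n+1-\pi_i$ for all $i$. Let $\mathfrak{R}_n$ be the set of rc-invariant alternating permutations of $[2n]$. For $p\in\mathcal{S}_n$, define $\tilde p_i=n+p_i$ if $p_i>0$ and $\tilde p_i=n+1+p_i$ if $p_i<0$. Then $\psi(p)$ is the unique rc-invariant permutation of $[2n]$ such that: - if $n$ is odd, its first $n$ entries are $\tilde p_n\tilde p_{n-1}\cdots\tilde p_1$; - if $n$ is even, its last $n$ entries are $\tilde p_1\cdots\tilde p_n$. Example: $p=2\,1\,5\,\bar4\,\bar3$ (where $\bar k=-k$) gives $\psi(p)=3\,2\,10\,6\,7\,4\,5\,1\,9\,8$. *)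

theory Defs
  imports Main
begin

text \<open>Words are lists, indexed from 0: the paper's p_i is p ! (i-1).\<close>

definition down_up :: "int list \<Rightarrow> bool" where
  "down_up w \<longleftrightarrow> (\<forall>i. Suc i < length w \<longrightarrow>
      (if even i then w ! i > w ! Suc i else w ! i < w ! Suc i))"

definition snakes :: "nat \<Rightarrow> int list set" where
  "snakes n = {p. length p = n
      \<and> distinct (map abs p) \<and> set (map abs p) = {1..int n}
      \<and> p ! 0 > 0
      \<and> down_up p}"

definition is_perm_of :: "int list \<Rightarrow> int \<Rightarrow> bool" where
  "is_perm_of w m \<longleftrightarrow> length w = nat m \<and> distinct w \<and> set w = {1..m}"

definition rc_invariant :: "int list \<Rightarrow> bool" where
  "rc_invariant w \<longleftrightarrow> (\<forall>i < length w.
      w ! (length w - 1 - i) = int (length w) + 1 - w ! i)"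

definition rc_alt :: "nat \<Rightarrow> int list set" where
  "rc_alt n = {w. is_perm_of w (2 * int n) \<and> down_up w \<and> rc_invariant w}"

definition tilde :: "nat \<Rightarrow> int \<Rightarrow> int" where
  "tilde n x = (if x > 0 then int n + x else int n + 1 + x)"

text \<open>psi: the rc-invariant word of length 2n whose first n entries are
  tilde p_n ... tilde p_1 (n odd), resp. whose last n entries are
  tilde p_1 ... tilde p_n (n even); the other half is forced by rc-invariance.\<close>

definition psi :: "nat \<Rightarrow> int list \<Rightarrow> int list" where
  "psi n p = (let t = map (tilde n) p; c = (\<lambda>x. 2 * int n + 1 - x) in
     if odd n then rev t @ map c t
     else rev (map c t) @ t)"

end

theory Submission
  imports Defs
begin

text \<open>Since the complement 2n + 1 - tilde x of tilde x is tilde (-x), the word psi p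
  consists of tilde applied to p and to -p, one half reversed. As tilde is an increasing
  bijection from the nonzero integers in [-n, n] onto [1, 2n], psi p is a permutation of
  [2n] exactly when |p_1| ... |p_n| is a permutation of [n], and it is alternating exactly
  when p is alternating
  (reversal and complementation each flip the direction of the first step, and the two
  halves have the right parities) and the junction tilde p_1 > 2n + 1 - tilde p_1 holds,
  i.e. p_1 > 0. The rc-invariance is automatic, and an rc-invariant word is determined by
  one half, which gives the inverse map.\<close>

definition alternating :: "bool \<Rightarrow> 'a::linorder list \<Rightarrow> bool" where
  "alternating down w \<longleftrightarrow> (\<forall>i. Suc i < length w \<longrightarrow>
      (if even i = down then w ! i > w ! Suc i else w ! i < w ! Suc i))"

lemma down_up_eq_alternating: "down_up w = alternating True w"
  by (simp add: down_up_def alternating_def)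

lemma alternating_map_strict_mono_on:
  fixes f :: "'a::linorder \<Rightarrow> 'b::linorder"
  assumes "strict_mono_on (set xs) f"
  shows "alternating b (map f xs) = alternating b xs"
  using strict_mono_on_less[OF assms] by (simp add: alternating_def)

lemma alternating_map_strict_antimono_on:
  fixes f :: "'a::linorder \<Rightarrow> 'b::linorder"
  assumes "strict_antimono_on (set xs) f"
  shows "alternating b (map f xs) = alternating (\<not> b) xs"
proof -
  have "f x < f y \<longleftrightarrow> y < x" if "x \<in> set xs" "y \<in> set xs" for x y
    using monotone_onD[OF assms that] monotone_onD[OF assms that(2,1)]
    by (cases x y rule: linorder_cases) auto
  then show ?thesis by (auto simp: alternating_def)
qed

lemma alternating_rev: "alternating b (rev xs) = alternating (b = odd (length xs)) xs"
proof -
  have rev_step: "alternating (b = odd (length xs)) (rev xs)"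
    if "alternating b xs" for b and xs :: "'a list"
    unfolding alternating_def
  proof (intro allI impI)
    fix i assume i: "Suc i < length (rev xs)"
    define j where "j = length xs - 2 - i"
    have j: "Suc j < length xs" "length xs - Suc i = Suc j" "length xs - Suc (Suc i) = j"
      and par: "even j = (even (length xs) = even i)"
      using i by (auto simp: j_def)
    from that j(1) have "if even j = b then xs ! j > xs ! Suc j else xs ! j < xs ! Suc j"
      unfolding alternating_def by blast
    then show "if even i = (b = odd (length xs)) then rev xs ! i > rev xs ! Suc i
        else rev xs ! i < rev xs ! Suc i"
      using i j par by (auto simp: rev_nth split: if_splits)
  qed
  show ?thesis
    using rev_step[of b "rev xs"] rev_step[of "b = odd (length xs)" xs]
    by (cases "odd (length xs)") auto
qed

lemma alternating_append:
  "alternating b (xs @ ys) \<longleftrightarrow> alternating b xs \<and> alternating (b = even (length xs)) ys \<and>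
     (xs \<noteq> [] \<longrightarrow> ys \<noteq> [] \<longrightarrow>
        (if even (length xs - 1) = b then last xs > hd ys else last xs < hd ys))"
  (is "?lhs \<longleftrightarrow> ?left \<and> ?right \<and> ?join")
proof
  assume lhs: ?lhs
  have step: "if even i = b then (xs @ ys) ! i > (xs @ ys) ! Suc i
      else (xs @ ys) ! i < (xs @ ys) ! Suc i" if "Suc i < length xs + length ys" for i
    using lhs that unfolding alternating_def by simp
  have ?left
    unfolding alternating_def
  proof (intro allI impI)
    fix i assume "Suc i < length xs"
    then show "if even i = b then xs ! i > xs ! Suc i else xs ! i < xs ! Suc i"
      using step[of i] by (auto simp: nth_append_left)
  qed
  moreover have ?right
    unfolding alternating_def
  proof (intro allI impI)
    fix i assume "Suc i < length ys"
    then show "if even i = (b = even (length xs)) then ys ! i > ys ! Suc i else ys ! i < ys ! Suc i"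
      using step[of "length xs + i"] by (auto simp: nth_append split: if_splits)
  qed
  moreover have ?join
  proof (intro impI)
    assume ne: "xs \<noteq> []" "ys \<noteq> []"
    then obtain m where m: "length xs = Suc m" by (cases xs) auto
    have last: "(xs @ ys) ! m = last xs" and hd: "(xs @ ys) ! Suc m = hd ys"
      using ne m by (simp_all add: nth_append last_conv_nth hd_conv_nth)
    have "Suc m < length xs + length ys"
      using ne m by (cases ys) auto
    from step[OF this] show "if even (length xs - 1) = b then last xs > hd ys else last xs < hd ys"
      unfolding last hd m by simp
  qed
  ultimately show "?left \<and> ?right \<and> ?join" by blast
next
  assume rhs: "?left \<and> ?right \<and> ?join"
  show ?lhs
    unfolding alternating_def
  proof (intro allI impI)
    fix i assume i: "Suc i < length (xs @ ys)"
    consider "Suc i < length xs" | "Suc i = length xs" | k where "i = length xs + k"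
      by (cases "length xs \<le> i") (auto dest: le_Suc_ex Suc_lessI simp: not_le)
    then show "if even i = b then (xs @ ys) ! i > (xs @ ys) ! Suc i
        else (xs @ ys) ! i < (xs @ ys) ! Suc i"
    proof cases
      case 1
      then show ?thesis using rhs by (auto simp: alternating_def nth_append_left)
    next
      case 2
      then have ne: "xs \<noteq> []" "ys \<noteq> []" and m: "length xs - 1 = i"
        using i by auto
      have "(xs @ ys) ! i = last xs" "(xs @ ys) ! Suc i = hd ys"
        using 2 ne by (simp_all add: nth_append last_conv_nth hd_conv_nth flip: 2)
      with rhs ne show ?thesis unfolding m by simp
    next
      case 3
      then show ?thesis
        using rhs i unfolding alternating_def by (auto simp: nth_append split: if_splits)
    qed
  qed
qed

lemma rc_invariant_iff_rev: "rc_invariant w \<longleftrightarrow> rev w = map (\<lambda>x. int (length w) + 1 - x) w"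
  by (auto simp: rc_invariant_def list_eq_iff_nth_eq rev_nth)

lemma rc_invariant_append_iff:
  fixes xs ys :: "int list"
  assumes "length xs = m" "length ys = m"
  shows "rc_invariant (xs @ ys) \<longleftrightarrow> ys = map (\<lambda>x. 2 * int m + 1 - x) (rev xs)"
proof -
  let ?c = "\<lambda>x. 2 * int m + 1 - x"
  have "rc_invariant (xs @ ys) \<longleftrightarrow> rev ys = map ?c xs \<and> rev xs = map ?c ys"
    using assms by (simp add: rc_invariant_iff_rev algebra_simps)
  also have "\<dots> \<longleftrightarrow> ys = map ?c (rev xs)"
    by (auto simp: rev_map rev_swap comp_def)
  finally show ?thesis .
qed

lemma abs_mem_abs_image_iff:
  fixes S :: "'a::linordered_idom set"
  shows "\<bar>x\<bar> \<in> abs ` S \<longleftrightarrow> x \<in> S \<union> uminus ` S"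
  by (auto simp: abs_eq_iff image_iff)

lemma distinct_map_abs_iff:
  fixes p :: "int list"
  assumes "0 \<notin> set p"
  shows "distinct (map abs p) \<longleftrightarrow> distinct (p @ map uminus p)"
proof -
  have "inj_on abs (set p) \<longleftrightarrow> set p \<inter> uminus ` set p = {}"
    using assms unfolding inj_on_def by (auto simp: abs_eq_iff)
  then show ?thesis
    by (auto simp: distinct_map inj_on_def)
qed

lemma abs_vimage_eq_iff:
  fixes A B :: "'a::linordered_idom set"
  assumes "A \<subseteq> {0..}" "B \<subseteq> {0..}"
  shows "abs -` A = abs -` B \<longleftrightarrow> A = B"
proof -
  have "abs ` (abs -` C) = C" if "C \<subseteq> {0..}" for C :: "'a set"
  proof -
    have "y \<in> range abs" if "y \<in> C" for y
      using that \<open>C \<subseteq> {0..}\<close> by (intro range_eqI[where x = y]) auto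
    then show ?thesis by auto
  qed
  with assms show ?thesis by metis
qed

lemma set_map_abs_iff:
  fixes p :: "int list"
  shows "set (map abs p) = {1..m} \<longleftrightarrow> set (p @ map uminus p) = {- m..m} - {0}"
proof -
  have "set (p @ map uminus p) = abs -` set (map abs p)" "{- m..m} - {0} = abs -` {1..m}"
    by (simp_all only: set_eq_iff vimage_eq set_map abs_mem_abs_image_iff) (auto simp: abs_le_iff)
  then show ?thesis
    by (simp add: abs_vimage_eq_iff subset_eq)
qed

definition untilde :: "nat \<Rightarrow> int \<Rightarrow> int" where
  "untilde n y = (if y > int n then y - int n else y - int n - 1)"

lemma tilde_untilde [simp]: "tilde n (untilde n y) = y"
  by (simp add: tilde_def untilde_def)

lemma untilde_tilde [simp]: "x \<noteq> 0 \<Longrightarrow> untilde n (tilde n x) = x"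
  by (simp add: tilde_def untilde_def)

lemma untilde_nonzero: "untilde n y \<noteq> 0"
  by (simp add: untilde_def)

lemma strict_mono_on_tilde: "strict_mono_on (- {0}) (tilde n)"
  by (rule strict_mono_onI) (simp add: tilde_def)

lemma tilde_uminus: "x \<noteq> 0 \<Longrightarrow> 2 * int n + 1 - tilde n x = tilde n (- x)"
  by (simp add: tilde_def)

lemma tilde_image: "tilde n ` ({- int n..int n} - {0}) = {1..2 * int n}"
proof
  show "tilde n ` ({- int n..int n} - {0}) \<subseteq> {1..2 * int n}"
    by (auto simp: tilde_def)
  show "{1..2 * int n} \<subseteq> tilde n ` ({- int n..int n} - {0})"
  proof
    fix y assume "y \<in> {1..2 * int n}"
    then have "untilde n y \<in> {- int n..int n} - {0}"
      by (auto simp: untilde_def)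
    then show "y \<in> tilde n ` ({- int n..int n} - {0})"
      by (metis image_eqI tilde_untilde)
  qed
qed

lemma psi_eq_tilde:
  assumes "0 \<notin> set p"
  shows "psi n p = (let t = map (tilde n) p; t' = map (tilde n) (map uminus p) in
    if odd n then rev t @ t' else rev t' @ t)"
proof -
  have "map (\<lambda>x. 2 * int n + 1 - x) (map (tilde n) p) = map (tilde n) (map uminus p)"
    using assms by (auto intro!: tilde_uminus)
  then show ?thesis by (simp add: psi_def Let_def)
qed

lemma is_perm_of_psi_iff:
  assumes "length p = n" "0 \<notin> set p"
  shows "is_perm_of (psi n p) (2 * int n) \<longleftrightarrow>
    distinct (map abs p) \<and> set (map abs p) = {1..int n}"
proof -
  let ?q = "p @ map uminus p"
  have q: "set ?q \<subseteq> - {0}" "{- int n..int n} - {0} \<subseteq> - {0}"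
    using assms(2) by auto
  have inj: "inj_on (tilde n) (- {0})"
    using strict_mono_on_imp_inj_on strict_mono_on_tilde by blast
  have psi: "distinct (psi n p) = distinct (map (tilde n) ?q)" "set (psi n p) = tilde n ` set ?q"
    using psi_eq_tilde[OF assms(2), of n] by (auto simp: Let_def simp del: map_map)
  have "distinct (psi n p) \<longleftrightarrow> distinct ?q"
    unfolding psi(1) distinct_map using inj_on_subset[OF inj q(1)] by blast
  moreover have "set (psi n p) = {1..2 * int n} \<longleftrightarrow> set ?q = {- int n..int n} - {0}"
    using inj_on_image_eq_iff[OF inj q] by (simp only: psi(2) tilde_image[symmetric])
  moreover have "length (psi n p) = nat (2 * int n)"
    using assms(1) by (simp add: psi_def Let_def nat_mult_distrib)
  ultimately show ?thesis
    unfolding is_perm_of_def distinct_map_abs_iff[OF assms(2)] set_map_abs_iff by blast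
qed

lemma down_up_psi_iff:
  assumes "length p = n" "n \<ge> 1" "0 \<notin> set p"
  shows "down_up (psi n p) \<longleftrightarrow> down_up p \<and> p ! 0 > 0"
proof -
  define t where "t = map (tilde n) p"
  define c where "c = (\<lambda>x. 2 * int n + 1 - x)"
  have t_alt: "alternating b t \<longleftrightarrow> alternating b p" for b
    unfolding t_def using assms(3)
    by (intro alternating_map_strict_mono_on monotone_on_subset[OF strict_mono_on_tilde]) auto
  have ct_alt: "alternating b (map c t) \<longleftrightarrow> alternating (\<not> b) t" for b
    by (rule alternating_map_strict_antimono_on) (auto simp: c_def intro: monotone_onI)
  have "p ! 0 \<in> set p"
    using assms(1,2) by (intro nth_mem) simp
  then have "p ! 0 \<noteq> 0"
    using assms(3) by auto
  then have junction: "c (t ! 0) < t ! 0 \<longleftrightarrow> p ! 0 > 0"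
    using assms(1,2) by (auto simp: t_def c_def tilde_def)
  have "t \<noteq> []" "length t = n"
    using assms(1,2) by (auto simp: t_def)
  with junction show ?thesis
    unfolding psi_def Let_def down_up_eq_alternating t_def[symmetric] c_def[symmetric]
    by (auto simp: alternating_append alternating_rev t_alt ct_alt hd_conv_nth last_rev hd_map)
qed

lemma rc_invariant_psi: "length p = n \<Longrightarrow> rc_invariant (psi n p)"
  by (simp add: psi_def Let_def rc_invariant_append_iff rev_map)

lemma psi_mem_rc_alt_iff:
  assumes "n \<ge> 1" "length p = n" "0 \<notin> set p"
  shows "psi n p \<in> rc_alt n \<longleftrightarrow> p \<in> snakes n"
  using assms
  by (simp add: rc_alt_def snakes_def is_perm_of_psi_iff down_up_psi_iff rc_invariant_psi conj_ac)

definition phi :: "nat \<Rightarrow> int list \<Rightarrow> int list" where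
  "phi n w = map (untilde n) (if odd n then rev (take n w) else drop n w)"

lemma phi_psi:
  assumes "length p = n" "0 \<notin> set p"
  shows "phi n (psi n p) = p"
proof -
  have "map (untilde n) (map (tilde n) p) = p"
    using assms(2) by (induction p) auto
  then show ?thesis
    using assms(1) by (simp add: phi_def psi_def Let_def del: map_map)
qed

lemma psi_phi:
  assumes "length w = 2 * n" "rc_invariant w"
  shows "psi n (phi n w) = w"
proof -
  have halves: "drop n w = map (\<lambda>x. 2 * int n + 1 - x) (rev (take n w))"
    using assms rc_invariant_append_iff[of "take n w" n "drop n w"] by simp
  then show ?thesis
    using append_take_drop_id[of n w]
    by (auto simp: phi_def psi_def Let_def rev_map comp_def)
qed

lemma snake_length_nonzero:
  assumes "p \<in> snakes n"
  shows "length p = n" "0 \<notin> set p"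
  using assms image_eqI[of 0 abs 0 "set p"] by (auto simp: snakes_def)

theorem theorem3p2:
  fixes n :: nat
  assumes "n \<ge> 1"
  shows "bij_betw (psi n) (snakes n) (rc_alt n)"
proof (rule bij_betw_byWitness[where f' = "phi n"])
  have rc_alt_word: "length w = 2 * n" "rc_invariant w" if "w \<in> rc_alt n" for w
    using that by (auto simp: rc_alt_def is_perm_of_def)
  show "\<forall>p\<in>snakes n. phi n (psi n p) = p"
    using phi_psi snake_length_nonzero by blast
  show "\<forall>w\<in>rc_alt n. psi n (phi n w) = w"
    using rc_alt_word psi_phi by blast
  show "psi n ` snakes n \<subseteq> rc_alt n"
    using assms psi_mem_rc_alt_iff snake_length_nonzero by blast
  show "phi n ` rc_alt n \<subseteq> snakes n"
  proof
    fix p assume "p \<in> phi n ` rc_alt n"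
    then obtain w where w: "w \<in> rc_alt n" and p: "p = phi n w" by blast
    have "length p = n" "0 \<notin> set p"
      using rc_alt_word[OF w] untilde_nonzero by (auto simp: p phi_def)
    moreover have "psi n p \<in> rc_alt n"
      using rc_alt_word[OF w] w psi_phi by (simp add: p)
    ultimately show "p \<in> snakes n"
      using assms psi_mem_rc_alt_iff by blast
  qed
qed

end
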